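(* Let $A\ge1$, $B>0$, $C\ge0$ be real numbers, $U\subset(0,1)^d$ open, and let $f:U\to\mathbb{R}$ be a map such that $f$ and all first-order partial derivatives $\partial f/\partial x_i$ ($i=1,\dots,d$) are weakly $(A,B,C)$-mild. Let $r>0$ be an integer, let $n_1,\ldots,n_d$ be integers with $n_i\ge r$ for all $i$, define $\phi:(0,1)^d\to(0,1)^d$ by $\phi(x_1,\ldots,x_d)=(x_1^{n_1},\ldots,x_d^{n_d})$, and let $V=\phi^{-1}(U)$. Then $f\circ\phi:V\to\mathbb{R}$ is $(\tilde A,B,C)$-mild up to order $r$, where $\tilde A=NA(d+1)^{C+1}$ and $N=\max(n_1,\ldots,n_d)$.
   Context: For $W\subset(0,1)^d$ open, $g:W\to\mathbb{R}$ is weakly $(A,B,C)$-mild if it is $C^\infty$ and $|g^{(\nu)}(x)|\le B^{C+1}A^{|\nu|}|\nu|!^{C+1}/x^\nu$ for all $x\in W$ and all $\nu\in\mathbb{N}^d$. For $W$ open, $h:W\to\mathbb{R}$ is $(A,B,C)$-mild up to order $r$ if it is $C^r$ and $|h^{(\nu)}(x)|\le B^{C+1}A^{|\nu|}|\nu|!^{C+1}$ for all $x\in W$ and $\nu$ with $|\nu|\le r$. Here $g^{(\nu)}=\partial^{|\nu|}g/\partial x_1^{\nu_1}\cdots\partial x_d^{\nu_d}$, $|\nu|=\sum\nu_i$, $x^\nu=\prod x_i^{\nu_i}$. *)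

theory Defs
  imports "HOL-Analysis.Analysis"
begin

definition pd :: "'n::finite \<Rightarrow> (real^'n \<Rightarrow> real) \<Rightarrow> real^'n \<Rightarrow> real" where
  "pd i g x = deriv (\<lambda>t. g (x + t *\<^sub>R axis i 1)) 0"

fun pds :: "'n::finite list \<Rightarrow> (real^'n \<Rightarrow> real) \<Rightarrow> real^'n \<Rightarrow> real" where
  "pds [] g = g"
| "pds (i # is) g = pd i (pds is g)"

definition Ck_on :: "nat \<Rightarrow> (real^'n::finite \<Rightarrow> real) \<Rightarrow> (real^'n) set \<Rightarrow> bool" where
  "Ck_on k g W \<longleftrightarrow>
     (\<forall>is. length is \<le> k \<longrightarrow> continuous_on W (pds is g)) \<and>
     (\<forall>is i x. length is < k \<longrightarrow> x \<in> W \<longrightarrow>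
        (\<lambda>t::real. pds is g (x + t *\<^sub>R axis i 1)) differentiable (at 0))"

definition Cinf_on :: "(real^'n::finite \<Rightarrow> real) \<Rightarrow> (real^'n) set \<Rightarrow> bool" where
  "Cinf_on g W \<longleftrightarrow> (\<forall>k. Ck_on k g W)"

text \<open>Multi-index nu corresponds to any list of directions in which i occurs nu_i times.\<close>
definition weakly_mild :: "real \<Rightarrow> real \<Rightarrow> real \<Rightarrow> (real^'n::finite) set \<Rightarrow> (real^'n \<Rightarrow> real) \<Rightarrow> bool" where
  "weakly_mild A B C W g \<longleftrightarrow> Cinf_on g W \<and>
     (\<forall>is. \<forall>x\<in>W. \<bar>pds is g x\<bar> \<le>
        B powr (C + 1) * A ^ length is * (fact (length is)) powr (C + 1)
          / (\<Prod>i\<in>UNIV. (x $ i) ^ count_list is i))"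

definition mild_upto :: "real \<Rightarrow> real \<Rightarrow> real \<Rightarrow> nat \<Rightarrow> (real^'n::finite) set \<Rightarrow> (real^'n \<Rightarrow> real) \<Rightarrow> bool" where
  "mild_upto A B C r W h \<longleftrightarrow> Ck_on r h W \<and>
     (\<forall>is. length is \<le> r \<longrightarrow> (\<forall>x\<in>W. \<bar>pds is h x\<bar> \<le>
        B powr (C + 1) * A ^ length is * (fact (length is)) powr (C + 1)))"

definition phi :: "('n::finite \<Rightarrow> nat) \<Rightarrow> real^'n \<Rightarrow> real^'n" where
  "phi n x = (\<chi> i. (x $ i) ^ n i)"

end

theory Submission
  imports Defs
begin

text \<open>By induction on the order, every derivative \<partial>^js (f \<circ> \<phi>) is a finite sum of terms
  c y^\<beta> (\<partial>^\<mu> f)(\<phi> y) with c \<ge> 0, |\<mu>| \<le> |js| and \<beta>_i + #_i js = n_i #_i \<mu>.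
  For \<mu> \<noteq> [] pick j in \<mu> with y_j minimal. By symmetry of second derivatives
  \<partial>^\<mu> f = \<partial>^(\<mu> - j) \<partial>_j f, whose weakly mild bound carries the singular factor
  1 / \<phi>(y)^(\<mu> - j); the exponent identity and |js| \<le> n_j give y^\<beta> \<le> \<phi>(y)^(\<mu> - j), so
  the singularity cancels. It remains to sum the coefficients, weighted by A^(|\<mu>|-1) (|\<mu>|-1)!^(C+1):
  differentiating an expansion of order K once more multiplies this sum by at most
  2 N A (K+1)^(C+1), so it stays below (2 N A)^K K!^(C+1); finally 2 \<le> (d+1)^(C+1).\<close>

lemma pds_append: "pds (is @ js) g = pds is (pds js g)"
  by (induction "is") auto

lemma eventually_axis_line_in_open:
  fixes x :: "real^'n::finite"
  assumes "open W" "x \<in> W"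
  shows "\<forall>\<^sub>F t in nhds 0. x + t *\<^sub>R axis i 1 \<in> W"
proof -
  have "((\<lambda>t::real. x + t *\<^sub>R axis i 1) \<longlongrightarrow> x) (nhds 0)"
    by (auto intro!: tendsto_eq_intros filterlim_ident)
  then show ?thesis
    using assms by (rule topological_tendstoD)
qed

lemma pd_cong_open:
  assumes "open W" "x \<in> W" "\<And>z. z \<in> W \<Longrightarrow> g z = h z"
  shows "pd i g x = pd i h x"
  unfolding pd_def
proof (rule deriv_cong_ev)
  show "\<forall>\<^sub>F t in nhds 0. g (x + t *\<^sub>R axis i 1) = h (x + t *\<^sub>R axis i 1)"
    using eventually_axis_line_in_open[OF assms(1,2)] by (rule eventually_mono) (use assms(3) in auto)
qed simp

lemma has_real_derivative_pd:
  assumes "(\<lambda>t. g (x + t *\<^sub>R axis i 1)) differentiable (at 0)"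
  shows "((\<lambda>t. g (x + t *\<^sub>R axis i 1)) has_real_derivative pd i g x) (at 0)"
  using assms unfolding pd_def by (simp add: DERIV_deriv_iff_real_differentiable)

lemma has_real_derivative_pd_at:
  assumes "(\<lambda>t. g (x + s *\<^sub>R axis i 1 + t *\<^sub>R axis i 1)) differentiable (at 0)"
  shows "((\<lambda>t. g (x + t *\<^sub>R axis i 1)) has_real_derivative pd i g (x + s *\<^sub>R axis i 1)) (at s)"
proof -
  have "(\<lambda>t. g (x + s *\<^sub>R axis i 1 + t *\<^sub>R axis i 1)) = (\<lambda>t. g (x + (t + s) *\<^sub>R axis i 1))"
    by (simp add: scaleR_add_left add_ac)
  then show ?thesis
    using has_real_derivative_pd[OF assms] DERIV_shift[of "\<lambda>t. g (x + t *\<^sub>R axis i 1)" _ 0 s]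
    by simp
qed

lemma Ck_on_pds: "Ck_on (k + length js) g W \<Longrightarrow> Ck_on k (pds js g) W"
  unfolding Ck_on_def pds_append[symmetric]
  by (metis add_le_mono1 add_less_mono1 length_append)

lemma Cinf_on_pds: "Cinf_on g W \<Longrightarrow> Cinf_on (pds js g) W"
  unfolding Cinf_on_def using Ck_on_pds by blast

lemma Ck_on_continuous_on_pds: "Ck_on k g W \<Longrightarrow> length js \<le> k \<Longrightarrow> continuous_on W (pds js g)"
  unfolding Ck_on_def by blast

lemma Ck_on_differentiable_pds:
  "Ck_on k g W \<Longrightarrow> length js < k \<Longrightarrow> x \<in> W \<Longrightarrow>
     (\<lambda>t::real. pds js g (x + t *\<^sub>R axis i 1)) differentiable (at 0)"
  unfolding Ck_on_def by blast

lemma Cinf_on_continuous_on_pds: "Cinf_on g W \<Longrightarrow> continuous_on W (pds js g)"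
  unfolding Cinf_on_def using Ck_on_continuous_on_pds by blast

lemma Cinf_on_differentiable_pds:
  "Cinf_on g W \<Longrightarrow> x \<in> W \<Longrightarrow> (\<lambda>t::real. pds js g (x + t *\<^sub>R axis i 1)) differentiable (at 0)"
  unfolding Cinf_on_def using Ck_on_differentiable_pds lessI by blast

lemma second_difference_mvt:
  fixes x :: "real^'n::finite" and h :: "real^'n \<Rightarrow> real"
  assumes "Ck_on 2 h U" and "s > 0"
    and in_U: "\<And>\<sigma> \<tau>. 0 \<le> \<sigma> \<Longrightarrow> \<sigma> \<le> s \<Longrightarrow> 0 \<le> \<tau> \<Longrightarrow> \<tau> \<le> s \<Longrightarrow>
                 x + \<sigma> *\<^sub>R axis a 1 + \<tau> *\<^sub>R axis b 1 \<in> U"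
  obtains \<sigma> \<tau> where "0 < \<sigma>" "\<sigma> < s" "0 < \<tau>" "\<tau> < s"
    "h (x + s *\<^sub>R axis a 1 + s *\<^sub>R axis b 1) - h (x + s *\<^sub>R axis a 1) - h (x + s *\<^sub>R axis b 1) + h x
       = s * s * pd b (pd a h) (x + \<sigma> *\<^sub>R axis a 1 + \<tau> *\<^sub>R axis b 1)"
proof -
  let ?ea = "axis a (1::real)" and ?eb = "axis b (1::real)"
  have diff: "(\<lambda>t. pds js h (z + t *\<^sub>R axis i 1)) differentiable (at 0)"
    if "length js < 2" "z \<in> U" for js z i
    using Ck_on_differentiable_pds[OF assms(1) that] .
  define F where "F u = h (x + s *\<^sub>R ?eb + u *\<^sub>R ?ea) - h (x + u *\<^sub>R ?ea)" for u
  have "(F has_real_derivative pd a h (x + s *\<^sub>R ?eb + u *\<^sub>R ?ea) - pd a h (x + u *\<^sub>R ?ea)) (at u)"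
    if "0 \<le> u" "u \<le> s" for u
    unfolding F_def
  proof (intro DERIV_diff has_real_derivative_pd_at)
    show "(\<lambda>t. h (x + s *\<^sub>R ?eb + u *\<^sub>R ?ea + t *\<^sub>R ?ea)) differentiable (at 0)"
      using diff[of "[]" "x + s *\<^sub>R ?eb + u *\<^sub>R ?ea"] in_U[of u s] that \<open>s > 0\<close> by (simp add: add_ac)
    show "(\<lambda>t. h (x + u *\<^sub>R ?ea + t *\<^sub>R ?ea)) differentiable (at 0)"
      using diff[of "[]" "x + u *\<^sub>R ?ea"] in_U[of u 0] that \<open>s > 0\<close> by simp
  qed
  then obtain \<sigma> where \<sigma>: "0 < \<sigma>" "\<sigma> < s"
    and F_mvt: "F s - F 0 = s * (pd a h (x + s *\<^sub>R ?eb + \<sigma> *\<^sub>R ?ea) - pd a h (x + \<sigma> *\<^sub>R ?ea))"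
    using MVT2[OF \<open>s > 0\<close>, of F
        "\<lambda>u. pd a h (x + s *\<^sub>R ?eb + u *\<^sub>R ?ea) - pd a h (x + u *\<^sub>R ?ea)"] by auto
  define G where "G v = pd a h (x + \<sigma> *\<^sub>R ?ea + v *\<^sub>R ?eb)" for v
  have "(G has_real_derivative pd b (pd a h) (x + \<sigma> *\<^sub>R ?ea + v *\<^sub>R ?eb)) (at v)"
    if "0 \<le> v" "v \<le> s" for v
    unfolding G_def
    by (rule has_real_derivative_pd_at)
      (use diff[of "[a]" "x + \<sigma> *\<^sub>R ?ea + v *\<^sub>R ?eb"] in_U[of \<sigma> v] that \<sigma> in simp)
  then obtain \<tau> where \<tau>: "0 < \<tau>" "\<tau> < s"
    and G_mvt: "G s - G 0 = s * pd b (pd a h) (x + \<sigma> *\<^sub>R ?ea + \<tau> *\<^sub>R ?eb)"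
    using MVT2[OF \<open>s > 0\<close>, of G "\<lambda>v. pd b (pd a h) (x + \<sigma> *\<^sub>R ?ea + v *\<^sub>R ?eb)"]
    by auto
  have "h (x + s *\<^sub>R ?ea + s *\<^sub>R ?eb) - h (x + s *\<^sub>R ?ea) - h (x + s *\<^sub>R ?eb) + h x = F s - F 0"
    unfolding F_def by (simp add: add_ac)
  also have "\<dots> = s * (G s - G 0)"
    unfolding F_mvt G_def by (simp add: add_ac)
  also have "\<dots> = s * s * pd b (pd a h) (x + \<sigma> *\<^sub>R ?ea + \<tau> *\<^sub>R ?eb)"
    unfolding G_mvt by simp
  finally show ?thesis
    using that \<sigma> \<tau> by blast
qed

lemma dist_add_axes_le:
  fixes x :: "real^'n::finite"
  shows "dist (x + \<sigma> *\<^sub>R axis a 1 + \<tau> *\<^sub>R axis b 1) x \<le> \<bar>\<sigma>\<bar> + \<bar>\<tau>\<bar>"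
  using norm_triangle_ineq[of "\<sigma> *\<^sub>R axis a (1::real)" "\<tau> *\<^sub>R axis b 1"] by (simp add: dist_norm)

text \<open>Both mixed partials are attained, by the mean value theorem, by the same second difference
  of h over a small square.\<close>
lemma mixed_pds_eq_nearby:
  fixes h :: "real^'n::finite \<Rightarrow> real"
  assumes "open U" "Ck_on 2 h U" "x \<in> U" "e > 0"
  obtains z w where "dist z x < e" "dist w x < e" "pd b (pd a h) z = pd a (pd b h) w"
proof -
  obtain e' where "e' > 0" "ball x e' \<subseteq> U"
    using assms(1,3) open_contains_ball by blast
  define s where "s = min e e' / 3"
  have "s > 0"
    using \<open>e > 0\<close> \<open>e' > 0\<close> by (simp add: s_def)
  have near: "dist (x + \<sigma> *\<^sub>R axis a' 1 + \<tau> *\<^sub>R axis b' 1) x < min e e'"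
    if "0 \<le> \<sigma>" "\<sigma> \<le> s" "0 \<le> \<tau>" "\<tau> \<le> s" for \<sigma> \<tau> a' b'
    using dist_add_axes_le[of x \<sigma> a' \<tau> b'] that \<open>e > 0\<close> \<open>e' > 0\<close> by (simp add: s_def)
  have in_square: "x + \<sigma> *\<^sub>R axis a' 1 + \<tau> *\<^sub>R axis b' 1 \<in> U"
    if "0 \<le> \<sigma>" "\<sigma> \<le> s" "0 \<le> \<tau>" "\<tau> \<le> s" for \<sigma> \<tau> a' b'
    using near[OF that] \<open>ball x e' \<subseteq> U\<close> by (auto simp: dist_commute)
  obtain \<sigma>1 \<tau>1 where "0 < \<sigma>1" "\<sigma>1 < s" "0 < \<tau>1" "\<tau>1 < s" and diff1:
    "h (x + s *\<^sub>R axis a 1 + s *\<^sub>R axis b 1) - h (x + s *\<^sub>R axis a 1) - h (x + s *\<^sub>R axis b 1) + h x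
       = s * s * pd b (pd a h) (x + \<sigma>1 *\<^sub>R axis a 1 + \<tau>1 *\<^sub>R axis b 1)"
    by (rule second_difference_mvt[OF assms(2) \<open>s > 0\<close> in_square])
  obtain \<sigma>2 \<tau>2 where "0 < \<sigma>2" "\<sigma>2 < s" "0 < \<tau>2" "\<tau>2 < s" and diff2:
    "h (x + s *\<^sub>R axis b 1 + s *\<^sub>R axis a 1) - h (x + s *\<^sub>R axis b 1) - h (x + s *\<^sub>R axis a 1) + h x
       = s * s * pd a (pd b h) (x + \<sigma>2 *\<^sub>R axis b 1 + \<tau>2 *\<^sub>R axis a 1)"
    by (rule second_difference_mvt[OF assms(2) \<open>s > 0\<close> in_square])
  have "x + s *\<^sub>R axis b 1 + s *\<^sub>R axis a 1 = x + s *\<^sub>R axis a 1 + s *\<^sub>R axis b (1::real)"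
    by (simp add: add_ac)
  with diff1 diff2 \<open>s > 0\<close> have "pd b (pd a h) (x + \<sigma>1 *\<^sub>R axis a 1 + \<tau>1 *\<^sub>R axis b 1)
      = pd a (pd b h) (x + \<sigma>2 *\<^sub>R axis b 1 + \<tau>2 *\<^sub>R axis a 1)"
    by (simp add: algebra_simps)
  moreover have "dist (x + \<sigma>1 *\<^sub>R axis a 1 + \<tau>1 *\<^sub>R axis b 1) x < e"
    "dist (x + \<sigma>2 *\<^sub>R axis b 1 + \<tau>2 *\<^sub>R axis a 1) x < e"
    using near \<open>0 < \<sigma>1\<close> \<open>\<sigma>1 < s\<close> \<open>0 < \<tau>1\<close> \<open>\<tau>1 < s\<close>
      \<open>0 < \<sigma>2\<close> \<open>\<sigma>2 < s\<close> \<open>0 < \<tau>2\<close> \<open>\<tau>2 < s\<close> by fastforce+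
  ultimately show ?thesis
    using that by blast
qed

lemma pd_commute:
  fixes h :: "real^'n::finite \<Rightarrow> real"
  assumes "open U" "Ck_on 2 h U" "x \<in> U"
  shows "pd a (pd b h) x = pd b (pd a h) x"
proof (rule ccontr)
  let ?D1 = "pd b (pd a h)" and ?D2 = "pd a (pd b h)"
  define d where "d = \<bar>?D1 x - ?D2 x\<bar> / 2"
  assume "?D2 x \<noteq> ?D1 x"
  then have "d > 0"
    by (simp add: d_def)
  have "continuous_on U ?D1" "continuous_on U ?D2"
    using Ck_on_continuous_on_pds[OF assms(2), of "[b, a]"]
      Ck_on_continuous_on_pds[OF assms(2), of "[a, b]"] by simp_all
  then have "(?D1 \<longlongrightarrow> ?D1 x) (nhds x)" "(?D2 \<longlongrightarrow> ?D2 x) (nhds x)"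
    using assms(1,3) by (simp_all add: continuous_on_eq_continuous_at isCont_def
        tendsto_at_iff_tendsto_nhds)
  then have "\<forall>\<^sub>F z in nhds x. dist (?D1 z) (?D1 x) < d \<and> dist (?D2 z) (?D2 x) < d"
    using \<open>d > 0\<close> by (intro eventually_conj tendstoD)
  then obtain e where "e > 0" and near: "\<And>z. dist z x < e \<Longrightarrow>
      dist (?D1 z) (?D1 x) < d \<and> dist (?D2 z) (?D2 x) < d"
    unfolding eventually_nhds_metric by blast
  obtain z w where "dist z x < e" "dist w x < e" "?D1 z = ?D2 w"
    by (rule mixed_pds_eq_nearby[OF assms \<open>e > 0\<close>])
  then show False
    using near[of z] near[of w] unfolding d_def dist_real_def by argo
qed

lemma pd_pds_commute:
  fixes h :: "real^'n::finite \<Rightarrow> real"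
  assumes "open U" "Cinf_on h U" "x \<in> U"
  shows "pd j (pds js h) x = pds js (pd j h) x"
  using assms(3)
proof (induction js arbitrary: x)
  case (Cons i js)
  have "pd j (pd i (pds js h)) x = pd i (pd j (pds js h)) x"
    using pd_commute[OF assms(1) _ Cons.prems] Cinf_on_pds[OF assms(2)] by (simp add: Cinf_on_def)
  also have "\<dots> = pd i (pds js (pd j h)) x"
    by (rule pd_cong_open[OF assms(1) Cons.prems]) (rule Cons.IH)
  finally show ?case by simp
qed simp

lemma pds_remove1:
  fixes h :: "real^'n::finite \<Rightarrow> real"
  assumes "open U" "Cinf_on h U" "x \<in> U" "j \<in> set js"
  shows "pds js h x = pds (remove1 j js) (pd j h) x"
  using assms(3,4)
proof (induction js arbitrary: x)
  case (Cons i js)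
  show ?case
  proof (cases "i = j")
    case True
    then show ?thesis using pd_pds_commute[OF assms(1,2) Cons.prems(1)] by simp
  next
    case False
    then have "pd i (pds js h) x = pd i (pds (remove1 j js) (pd j h)) x"
      using Cons by (intro pd_cong_open[OF assms(1) Cons.prems(1)]) simp
    then show ?thesis using False by simp
  qed
qed simp

definition vec_power :: "real^'n::finite \<Rightarrow> ('n \<Rightarrow> nat) \<Rightarrow> real" where
  "vec_power y \<beta> = (\<Prod>i\<in>UNIV. (y $ i) ^ \<beta> i)"

lemma weakly_mildD:
  "weakly_mild A B C W g \<Longrightarrow> x \<in> W \<Longrightarrow>
     \<bar>pds is g x\<bar> \<le> B powr (C + 1) * A ^ length is * fact (length is) powr (C + 1)
                       / vec_power x (count_list is)"
  unfolding weakly_mild_def vec_power_def by blast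

lemma vec_power_add: "vec_power y (\<lambda>i. \<beta> i + \<gamma> i) = vec_power y \<beta> * vec_power y \<gamma>"
  by (simp add: vec_power_def power_add prod.distrib)

lemma vec_power_pos: "(\<And>i. y $ i > 0) \<Longrightarrow> vec_power y \<beta> > 0"
  unfolding vec_power_def by (intro prod_pos zero_less_power) simp

lemma vec_power_le_one: "y \<in> box 0 (\<chi> i. 1) \<Longrightarrow> vec_power y \<beta> \<le> 1"
  unfolding vec_power_def
  by (intro prod_le_1 conjI zero_le_power power_le_one) (auto simp: mem_box_cart less_imp_le)

lemma vec_power_remove:
  "vec_power y \<beta> = y $ j ^ \<beta> j * (\<Prod>i\<in>UNIV - {j}. (y $ i) ^ \<beta> i)"
  unfolding vec_power_def by (subst prod.remove[of UNIV j]) auto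

lemma vec_power_fun_upd:
  "vec_power y (\<beta>(j := k)) = y $ j ^ k * (\<Prod>i\<in>UNIV - {j}. (y $ i) ^ \<beta> i)"
proof -
  have "(\<Prod>i\<in>UNIV - {j}. (y $ i) ^ (\<beta>(j := k)) i) = (\<Prod>i\<in>UNIV - {j}. (y $ i) ^ \<beta> i)"
    by (rule prod.cong) auto
  then show ?thesis
    unfolding vec_power_remove[of _ _ j] by simp
qed

lemma vec_power_add_axis:
  "vec_power (y + s *\<^sub>R axis j 1) \<beta> = (y $ j + s) ^ \<beta> j * (\<Prod>i\<in>UNIV - {j}. (y $ i) ^ \<beta> i)"
proof -
  have "(\<Prod>i\<in>UNIV - {j}. ((y + s *\<^sub>R axis j 1) $ i) ^ \<beta> i) = (\<Prod>i\<in>UNIV - {j}. (y $ i) ^ \<beta> i)"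
    by (rule prod.cong) (auto simp: axis_def)
  then show ?thesis
    unfolding vec_power_remove[of _ _ j] by (simp add: axis_def)
qed

lemma phi_add_axis:
  "phi n (y + s *\<^sub>R axis j 1) = phi n y + ((y $ j + s) ^ n j - y $ j ^ n j) *\<^sub>R axis j 1"
  by (simp add: vec_eq_iff phi_def axis_def)

lemma continuous_on_phi: "continuous_on S (phi n)"
  unfolding phi_def by (intro continuous_on_vec_lambda continuous_intros)

text \<open>A triple (c, \<beta>, \<mu>) encodes the function y \<mapsto> c y^\<beta> (\<partial>^\<mu> f)(\<phi> y).
  Differentiating it in direction j hits either the monomial or, by the chain rule through
  \<phi>_j y = y_j^n_j, the factor \<partial>^\<mu> f; these are the two terms of chain_step.\<close>
type_synonym 'n chain_term = "real \<times> ('n \<Rightarrow> nat) \<times> 'n list"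

definition chain_term_val ::
    "('n::finite \<Rightarrow> nat) \<Rightarrow> (real^'n \<Rightarrow> real) \<Rightarrow> 'n chain_term \<Rightarrow> real^'n \<Rightarrow> real" where
  "chain_term_val n f = (\<lambda>(c, \<beta>, \<mu>) y. c * vec_power y \<beta> * pds \<mu> f (phi n y))"

definition chain_step :: "('n \<Rightarrow> nat) \<Rightarrow> 'n \<Rightarrow> 'n chain_term \<Rightarrow> 'n chain_term list" where
  "chain_step n j = (\<lambda>(c, \<beta>, \<mu>).
     [(c * real (\<beta> j), \<beta>(j := \<beta> j - 1), \<mu>), (c * real (n j), \<beta>(j := \<beta> j + n j - 1), j # \<mu>)])"

fun chain_terms :: "('n \<Rightarrow> nat) \<Rightarrow> 'n list \<Rightarrow> 'n chain_term list" where
  "chain_terms n [] = [(1, \<lambda>_. 0, [])]"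
| "chain_terms n (j # js) = concat (map (chain_step n j) (chain_terms n js))"

lemma sum_list_concat_map: "(\<Sum>u\<leftarrow>concat (map g xs). F u) = (\<Sum>t\<leftarrow>xs. \<Sum>u\<leftarrow>g t. F u)"
  by (induction xs) auto

lemma has_real_derivative_sum_list:
  assumes "\<And>t. t \<in> set xs \<Longrightarrow> (F t has_real_derivative F' t) (at x)"
  shows "((\<lambda>s. \<Sum>t\<leftarrow>xs. F t s) has_real_derivative (\<Sum>t\<leftarrow>xs. F' t)) (at x)"
  using assms by (induction xs) (auto intro: DERIV_add)

lemma continuous_on_sum_list:
  assumes "\<And>t. t \<in> set xs \<Longrightarrow> continuous_on S (F t)"
  shows "continuous_on S (\<lambda>y. \<Sum>t\<leftarrow>xs. F t y :: real)"
  using assms by (induction xs) (auto intro: continuous_on_add)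

lemma has_real_derivative_chain_term_val:
  fixes y :: "real^'n::finite"
  assumes "Cinf_on f U" "phi n y \<in> U" "n j \<ge> 1"
  shows "((\<lambda>s. chain_term_val n f t (y + s *\<^sub>R axis j 1)) has_real_derivative
           (\<Sum>u\<leftarrow>chain_step n j t. chain_term_val n f u y)) (at 0)"
proof -
  obtain c \<beta> \<mu> where t: "t = (c, \<beta>, \<mu>)" by (cases t) auto
  define R where "R = (\<Prod>i\<in>UNIV - {j}. (y $ i) ^ \<beta> i)"
  define g where "g u = pds \<mu> f (phi n y + u *\<^sub>R axis j 1)" for u
  define h where "h s = (y $ j + s) ^ n j - y $ j ^ n j" for s
  define D where "D = pd j (pds \<mu> f) (phi n y)"
  have val: "(\<lambda>s. chain_term_val n f t (y + s *\<^sub>R axis j 1))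
      = (\<lambda>s. c * ((y $ j + s) ^ \<beta> j * R) * g (h s))"
    using vec_power_add_axis[of y _ j \<beta>]
    by (simp add: t chain_term_val_def phi_add_axis R_def g_def h_def)
  have dg: "(g has_real_derivative D) (at (h 0))"
    unfolding g_def D_def h_def
    using has_real_derivative_pd[OF Cinf_on_differentiable_pds[OF assms(1,2)]] by simp
  have dh: "(h has_real_derivative real (n j) * y $ j ^ (n j - 1)) (at 0)"
    unfolding h_def by (auto intro!: derivative_eq_intros)
  have "((\<lambda>s. g (h s)) has_real_derivative D * (real (n j) * y $ j ^ (n j - 1))) (at 0)"
    by (rule DERIV_chain2[OF dg dh])
  then have "((\<lambda>s. c * ((y $ j + s) ^ \<beta> j * R) * g (h s)) has_real_derivative
      c * (real (\<beta> j) * y $ j ^ (\<beta> j - 1) * R * g (h 0)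
           + y $ j ^ \<beta> j * R * (D * (real (n j) * y $ j ^ (n j - 1))))) (at 0)"
    by (auto intro!: derivative_eq_intros) (simp add: algebra_simps)
  moreover have "y $ j ^ (\<beta> j + n j - 1) = y $ j ^ \<beta> j * y $ j ^ (n j - 1)"
    using assms(3) by (simp add: power_add[symmetric])
  ultimately show ?thesis
    unfolding val
    by (simp add: t chain_step_def chain_term_val_def D_def R_def g_def h_def vec_power_fun_upd
        algebra_simps del: fun_upd_apply)
qed

lemma pds_comp_phi:
  fixes f :: "real^'n::finite \<Rightarrow> real"
  assumes "Cinf_on f U" "open V" "\<And>y. y \<in> V \<Longrightarrow> phi n y \<in> U" "\<forall>i. n i \<ge> 1" "y \<in> V"
  shows "pds js (f \<circ> phi n) y = (\<Sum>t\<leftarrow>chain_terms n js. chain_term_val n f t y)"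
  using assms(5)
proof (induction js arbitrary: y)
  case (Cons j js)
  have "pd j (pds js (f \<circ> phi n)) y = pd j (\<lambda>z. \<Sum>t\<leftarrow>chain_terms n js. chain_term_val n f t z) y"
    by (rule pd_cong_open[OF assms(2) Cons.prems Cons.IH])
  also have "\<dots> = (\<Sum>t\<leftarrow>chain_terms n js. \<Sum>u\<leftarrow>chain_step n j t. chain_term_val n f u y)"
    unfolding pd_def
    using assms(4)
    by (intro DERIV_imp_deriv has_real_derivative_sum_list
        has_real_derivative_chain_term_val[OF assms(1) assms(3)[OF Cons.prems]]) simp
  finally show ?case by (simp add: sum_list_concat_map comp_def)
qed (simp add: chain_term_val_def vec_power_def)

lemma Cinf_on_comp_phi:
  fixes f :: "real^'n::finite \<Rightarrow> real"
  assumes "Cinf_on f U" "open V" "\<And>y. y \<in> V \<Longrightarrow> phi n y \<in> U" "\<forall>i. n i \<ge> 1"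
  shows "Cinf_on (f \<circ> phi n) V"
  unfolding Cinf_on_def Ck_on_def
proof (intro allI conjI impI)
  note expansion = pds_comp_phi[OF assms]
  fix js :: "'n list"
  have "continuous_on V (chain_term_val n f t)" for t
  proof -
    have "continuous_on V (\<lambda>y. pds \<mu> f (phi n y))" for \<mu>
      by (rule continuous_on_compose2[OF Cinf_on_continuous_on_pds[OF assms(1)] continuous_on_phi])
        (use assms(3) in auto)
    then show ?thesis
      unfolding chain_term_val_def vec_power_def by (cases t) (auto intro!: continuous_intros)
  qed
  then have "continuous_on V (\<lambda>y. \<Sum>t\<leftarrow>chain_terms n js. chain_term_val n f t y)"
    by (rule continuous_on_sum_list)
  then show "continuous_on V (pds js (f \<circ> phi n))"
    by (rule continuous_on_eq) (simp add: expansion)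
  fix i x
  assume "x \<in> V"
  have expansion_near: "\<forall>\<^sub>F s in nhds 0. (\<Sum>t\<leftarrow>chain_terms n js. chain_term_val n f t (x + s *\<^sub>R axis i 1))
      = pds js (f \<circ> phi n) (x + s *\<^sub>R axis i 1)"
    using eventually_axis_line_in_open[OF assms(2) \<open>x \<in> V\<close>, of i]
    by (rule eventually_mono) (simp add: expansion)
  have "((\<lambda>s. \<Sum>t\<leftarrow>chain_terms n js. chain_term_val n f t (x + s *\<^sub>R axis i 1))
      has_real_derivative (\<Sum>t\<leftarrow>chain_terms n js. \<Sum>u\<leftarrow>chain_step n i t. chain_term_val n f u x)) (at 0)"
    using assms(4)
    by (intro has_real_derivative_sum_list
        has_real_derivative_chain_term_val[OF assms(1) assms(3)[OF \<open>x \<in> V\<close>]]) simp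
  then show "(\<lambda>s. pds js (f \<circ> phi n) (x + s *\<^sub>R axis i 1)) differentiable (at 0)"
    unfolding real_differentiable_def using DERIV_cong_ev[OF refl expansion_near refl] by blast
qed

lemma chain_terms_invariant:
  assumes "(c, \<beta>, \<mu>) \<in> set (chain_terms n js)"
  shows "c \<ge> 0 \<and> length \<mu> \<le> length js \<and>
    (c \<noteq> 0 \<longrightarrow> (\<forall>i. \<beta> i + count_list js i = count_list \<mu> i * n i))"
  using assms
proof (induction js arbitrary: c \<beta> \<mu>)
  case (Cons j js)
  then obtain c0 \<beta>0 \<mu>0 where t0: "(c0, \<beta>0, \<mu>0) \<in> set (chain_terms n js)"
    and "(c, \<beta>, \<mu>) \<in> set (chain_step n j (c0, \<beta>0, \<mu>0))"
    by auto
  then consider "c = c0 * real (\<beta>0 j)" "\<beta> = \<beta>0(j := \<beta>0 j - 1)" "\<mu> = \<mu>0"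
    | "c = c0 * real (n j)" "\<beta> = \<beta>0(j := \<beta>0 j + n j - 1)" "\<mu> = j # \<mu>0"
    by (auto simp: chain_step_def)
  then show ?case
  proof cases
    case 1
    moreover have "\<beta> i + count_list (j # js) i = \<beta>0 i + count_list js i" if "\<beta>0 j \<noteq> 0" for i
      using 1 that by auto
    ultimately show ?thesis
      using Cons.IH[OF t0] by auto
  next
    case 2
    moreover have "\<beta> i + count_list (j # js) i = \<beta>0 i + count_list js i + (if i = j then n j else 0)"
      if "n j \<noteq> 0" for i
      using 2 that by auto
    ultimately show ?thesis
      using Cons.IH[OF t0] by (auto simp: algebra_simps)
  qed
qed simp

text \<open>mild_weight A C m is the weakly mild bound, without the factor B^(C+1), of an order m - 1
  derivative of some \<partial>_j f; for m = 0 truncated subtraction makes it 1, the bound for f itself.\<close>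
definition mild_weight :: "real \<Rightarrow> real \<Rightarrow> nat \<Rightarrow> real" where
  "mild_weight A C m = A ^ (m - 1) * fact (m - 1) powr (C + 1)"

definition term_weight :: "real \<Rightarrow> real \<Rightarrow> 'n chain_term \<Rightarrow> real" where
  "term_weight A C = (\<lambda>(c, \<beta>, \<mu>). c * mild_weight A C (length \<mu>))"

lemma mild_weight_nonneg: "A \<ge> 0 \<Longrightarrow> mild_weight A C m \<ge> 0"
  unfolding mild_weight_def by simp

lemma mild_weight_Suc:
  assumes "m \<ge> 1"
  shows "mild_weight A C (Suc m) = A * real m powr (C + 1) * mild_weight A C m"
proof -
  have "(fact m :: real) = real m * fact (m - 1)"
    using assms fact_reduce[of m] by simp
  moreover have "A ^ m = A * A ^ (m - 1)"
    using assms by (simp flip: power_Suc)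
  ultimately show ?thesis
    by (simp add: mild_weight_def powr_mult)
qed

lemma mild_weight_step:
  assumes "A \<ge> 1" "C \<ge> 0" "m \<le> K"
  shows "real m * mild_weight A C m + mild_weight A C (Suc m)
           \<le> 2 * A * real (Suc K) powr (C + 1) * mild_weight A C m"
proof (cases "m = 0")
  case True
  have "1 \<le> real (Suc K) powr (C + 1)"
    using assms(2) by (intro ge_one_powr_ge_zero) auto
  then have "1 \<le> A * real (Suc K) powr (C + 1)"
    using assms(1) by (metis mult_mono' mult_1 zero_le_one)
  then show ?thesis
    using True by (simp add: mild_weight_def)
next
  case False
  have w: "mild_weight A C m \<ge> 0"
    using assms(1) by (simp add: mild_weight_nonneg)
  have "real m \<le> real m powr (C + 1)"
    using powr_mono[of 1 "C + 1" "real m"] assms(2) False by simp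
  also have "\<dots> \<le> A * real m powr (C + 1)"
    using mult_right_mono[OF assms(1), of "real m powr (C + 1)"] by simp
  finally have "real m * mild_weight A C m \<le> A * real m powr (C + 1) * mild_weight A C m"
    using w by (rule mult_right_mono)
  then have "real m * mild_weight A C m + mild_weight A C (Suc m)
      \<le> 2 * A * real m powr (C + 1) * mild_weight A C m"
    using False by (simp add: mild_weight_Suc mult_ac)
  also have "\<dots> \<le> 2 * A * real (Suc K) powr (C + 1) * mild_weight A C m"
    using assms w by (intro mult_right_mono mult_left_mono powr_mono2) auto
  finally show ?thesis .
qed

lemma chain_step_weight_le:
  assumes "A \<ge> 1" "C \<ge> 0" "\<forall>i. real (n i) \<le> N"
    and "c \<ge> 0" "length \<mu> \<le> K" "c \<noteq> 0 \<Longrightarrow> \<beta> j \<le> length \<mu> * n j"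
  shows "(\<Sum>u\<leftarrow>chain_step n j (c, \<beta>, \<mu>). term_weight A C u)
           \<le> 2 * A * real (Suc K) powr (C + 1) * N * term_weight A C (c, \<beta>, \<mu>)"
proof -
  let ?m = "length \<mu>" and ?w = "mild_weight A C"
  have w: "?w ?m \<ge> 0" "?w (Suc ?m) \<ge> 0"
    using assms(1) by (simp_all add: mild_weight_nonneg)
  have "N \<ge> 0"
    using assms(3) of_nat_0_le_iff order_trans by blast
  have \<beta>_le: "c * real (\<beta> j) \<le> c * (real ?m * N)"
  proof (cases "c = 0")
    case False
    then have "real (\<beta> j) \<le> real ?m * real (n j)"
      using assms(6) of_nat_mono by fastforce
    also have "\<dots> \<le> real ?m * N"
      using assms(3) by (simp add: mult_left_mono)
    finally show ?thesis
      using assms(4) by (simp add: mult_left_mono)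
  qed simp
  have n_le: "c * real (n j) \<le> c * N"
    using assms(3,4) by (simp add: mult_left_mono)
  have "c * real (\<beta> j) * ?w ?m + c * real (n j) * ?w (Suc ?m)
      \<le> c * (real ?m * N) * ?w ?m + c * N * ?w (Suc ?m)"
    using mult_right_mono[OF \<beta>_le w(1)] mult_right_mono[OF n_le w(2)] by linarith
  also have "\<dots> = c * N * (real ?m * ?w ?m + ?w (Suc ?m))"
    by (simp add: algebra_simps)
  also have "\<dots> \<le> c * N * (2 * A * real (Suc K) powr (C + 1) * ?w ?m)"
    using assms(4) \<open>N \<ge> 0\<close> by (intro mult_left_mono mild_weight_step assms(1,2,5)) auto
  finally show ?thesis
    by (simp add: chain_step_def term_weight_def algebra_simps)
qed

lemma chain_terms_weight_le:
  assumes "A \<ge> 1" "C \<ge> 0" "\<forall>i. real (n i) \<le> N"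
  shows "(\<Sum>t\<leftarrow>chain_terms n js. term_weight A C t)
           \<le> (2 * N * A) ^ length js * fact (length js) powr (C + 1)"
proof (induction js)
  case Nil
  then show ?case by (simp add: term_weight_def mild_weight_def)
next
  case (Cons j js)
  let ?K = "length js"
  let ?M = "2 * A * real (Suc ?K) powr (C + 1) * N"
  have "N \<ge> 0"
    using assms(3) by (meson of_nat_0_le_iff order_trans)
  then have "?M \<ge> 0"
    using assms(1) by simp
  have "(\<Sum>t\<leftarrow>chain_terms n (j # js). term_weight A C t)
      = (\<Sum>t\<leftarrow>chain_terms n js. \<Sum>u\<leftarrow>chain_step n j t. term_weight A C u)"
    by (simp add: sum_list_concat_map)
  also have "\<dots> \<le> (\<Sum>t\<leftarrow>chain_terms n js. ?M * term_weight A C t)"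
  proof (rule sum_list_mono)
    fix t
    assume t: "t \<in> set (chain_terms n js)"
    obtain c \<beta> \<mu> where t_eq: "t = (c, \<beta>, \<mu>)"
      by (cases t)
    have inv: "c \<ge> 0" "length \<mu> \<le> ?K" "c \<noteq> 0 \<Longrightarrow> \<beta> j + count_list js j = count_list \<mu> j * n j"
      using chain_terms_invariant[of c \<beta> \<mu> n js] t t_eq by auto
    have "c \<noteq> 0 \<Longrightarrow> \<beta> j \<le> length \<mu> * n j"
      using inv(3) count_le_length[of \<mu> j] by (metis le_add1 le_trans mult_le_mono1)
    then show "(\<Sum>u\<leftarrow>chain_step n j t. term_weight A C u) \<le> ?M * term_weight A C t"
      unfolding t_eq by (rule chain_step_weight_le[OF assms inv(1,2)])
  qed
  also have "\<dots> = ?M * (\<Sum>t\<leftarrow>chain_terms n js. term_weight A C t)"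
    by (rule sum_list_const_mult)
  also have "\<dots> \<le> ?M * ((2 * N * A) ^ ?K * fact ?K powr (C + 1))"
    by (rule mult_left_mono[OF Cons.IH \<open>?M \<ge> 0\<close>])
  also have "\<dots> = (2 * N * A) ^ length (j # js) * fact (length (j # js)) powr (C + 1)"
    by (simp add: powr_mult algebra_simps del: of_nat_Suc)
  finally show ?case .
qed

lemma power_length_le_vec_power:
  assumes "0 \<le> a" "\<And>i. count_list js i \<noteq> 0 \<Longrightarrow> a \<le> y $ i"
  shows "a ^ length js \<le> vec_power y (count_list js)"
proof -
  have "a ^ length js = (\<Prod>i\<in>UNIV. a ^ count_list js i)"
    using sum_count_set[of js UNIV] by (simp add: power_sum[symmetric])
  also have "\<dots> \<le> vec_power y (count_list js)"
    unfolding vec_power_def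
  proof (rule prod_mono)
    fix i
    show "0 \<le> a ^ count_list js i \<and> a ^ count_list js i \<le> y $ i ^ count_list js i"
      using assms by (cases "count_list js i = 0") (auto intro: power_mono)
  qed
  finally show ?thesis .
qed

text \<open>y^\<beta> y^js = \<phi>(y)^(\<mu> - j) y_j^n_j, and y_j^n_j \<le> y_j^|js| \<le> y^js because |js| \<le> n_j and every
  index of js occurs in \<mu>, where y_j is minimal.\<close>
lemma vec_power_le_vec_power_phi:
  fixes y :: "real^'n::finite"
  assumes y: "y \<in> box 0 (\<chi> i. 1)"
    and exps: "\<And>i. \<beta> i + count_list js i = count_list \<mu> i * n i"
    and "j \<in> set \<mu>" and min: "\<And>i. i \<in> set \<mu> \<Longrightarrow> y $ j \<le> y $ i"
    and "length js \<le> n j"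
  shows "vec_power y \<beta> \<le> vec_power (phi n y) (count_list (remove1 j \<mu>))"
proof -
  have y01: "0 < y $ i" "y $ i < 1" for i
    using y by (auto simp: mem_box_cart)
  have "count_list \<mu> i = count_list (remove1 j \<mu>) i + ((\<lambda>_. 0)(j := 1)) i" for i
    using \<open>j \<in> set \<mu>\<close> count_list_0_iff[of \<mu> j] by auto
  then have "vec_power (phi n y) (count_list \<mu>)
      = vec_power (phi n y) (count_list (remove1 j \<mu>)) * y $ j ^ n j"
    using vec_power_add[of "phi n y" "count_list (remove1 j \<mu>)" "(\<lambda>_. 0)(j := 1)"]
    by (simp add: vec_power_fun_upd phi_def)
  moreover have "vec_power y \<beta> * vec_power y (count_list js) = vec_power (phi n y) (count_list \<mu>)"
    unfolding vec_power_add[symmetric] exps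
    by (simp add: vec_power_def phi_def power_mult mult.commute)
  moreover have "y $ j ^ n j \<le> vec_power y (count_list js)"
  proof -
    have "y $ j ^ n j \<le> y $ j ^ length js"
      using y01 \<open>length js \<le> n j\<close> by (intro power_decreasing) (auto intro: less_imp_le)
    also have "\<dots> \<le> vec_power y (count_list js)"
    proof (rule power_length_le_vec_power)
      show "y $ j \<le> y $ i" if "count_list js i \<noteq> 0" for i
        using that exps[of i] count_list_0_iff[of \<mu> i] min by fastforce
    qed (use y01 in \<open>auto intro: less_imp_le\<close>)
    finally show ?thesis .
  qed
  ultimately have "vec_power y \<beta> * y $ j ^ n j
      \<le> vec_power (phi n y) (count_list (remove1 j \<mu>)) * y $ j ^ n j"
    using vec_power_pos[of y \<beta>] y01 by (metis mult_left_mono less_imp_le)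
  then show ?thesis
    using y01 by simp
qed

lemma vec_power_mult_abs_pds_le:
  fixes f :: "real^'n::finite \<Rightarrow> real"
  assumes "open U" "weakly_mild A B C U f" "\<forall>i. weakly_mild A B C U (pd i f)"
    and y: "y \<in> box 0 (\<chi> i. 1)" "phi n y \<in> U"
    and exps: "\<And>i. \<beta> i + count_list js i = count_list \<mu> i * n i" and "\<forall>i. length js \<le> n i"
  shows "vec_power y \<beta> * \<bar>pds \<mu> f (phi n y)\<bar> \<le> B powr (C + 1) * mild_weight A C (length \<mu>)"
proof (cases "\<mu> = []")
  case True
  have "\<bar>f (phi n y)\<bar> \<le> B powr (C + 1)"
    using weakly_mildD[OF assms(2) y(2), of "[]"] by (simp add: vec_power_def)
  moreover have "vec_power y \<beta> * \<bar>f (phi n y)\<bar> \<le> \<bar>f (phi n y)\<bar>"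
    using mult_right_mono[OF vec_power_le_one[OF y(1)], of "\<bar>f (phi n y)\<bar>"] by simp
  ultimately show ?thesis
    using True by (simp add: mild_weight_def)
next
  case False
  let ?x = "phi n y" and ?bound = "B powr (C + 1) * mild_weight A C (length \<mu>)"
  define j where "j = arg_min_list (\<lambda>i. y $ i) \<mu>"
  have "j \<in> set \<mu>"
    using False by (simp add: j_def arg_min_list_in)
  have min: "y $ j \<le> y $ i" if "i \<in> set \<mu>" for i
    using f_arg_min_list_f[OF False, of "\<lambda>i. y $ i"] that by (simp add: j_def)
  let ?Q = "vec_power ?x (count_list (remove1 j \<mu>))"
  have "?Q > 0"
    using y(1) by (simp add: vec_power_pos phi_def mem_box_cart)
  have "pds \<mu> f ?x = pds (remove1 j \<mu>) (pd j f) ?x"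
    using assms(1,2) y(2) \<open>j \<in> set \<mu>\<close> by (simp add: weakly_mild_def pds_remove1)
  then have "\<bar>pds \<mu> f ?x\<bar> \<le> ?bound / ?Q"
    using weakly_mildD[OF assms(3)[rule_format, of j] y(2), of "remove1 j \<mu>"] \<open>j \<in> set \<mu>\<close>
    by (simp add: mild_weight_def length_remove1)
  then have "?Q * \<bar>pds \<mu> f ?x\<bar> \<le> ?bound"
    using \<open>?Q > 0\<close> by (simp add: field_simps)
  moreover have "vec_power y \<beta> \<le> ?Q"
    using exps assms(7) \<open>j \<in> set \<mu>\<close> min by (intro vec_power_le_vec_power_phi[OF y(1)]) auto
  ultimately show ?thesis
    by (meson abs_ge_zero mult_right_mono order_trans)
qed

lemma abs_chain_term_val_le:
  fixes f :: "real^'n::finite \<Rightarrow> real"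
  assumes "open U" "weakly_mild A B C U f" "\<forall>i. weakly_mild A B C U (pd i f)"
    and y: "y \<in> box 0 (\<chi> i. 1)" "phi n y \<in> U"
    and "t \<in> set (chain_terms n js)" "\<forall>i. length js \<le> n i"
  shows "\<bar>chain_term_val n f t y\<bar> \<le> B powr (C + 1) * term_weight A C t"
proof -
  obtain c \<beta> \<mu> where t: "t = (c, \<beta>, \<mu>)"
    by (cases t)
  note inv = chain_terms_invariant[of c \<beta> \<mu> n js]
  let ?P = "vec_power y \<beta> * \<bar>pds \<mu> f (phi n y)\<bar>"
  have "c \<ge> 0"
    using inv assms(6) t by simp
  have "c * ?P \<le> c * (B powr (C + 1) * mild_weight A C (length \<mu>))"
  proof (cases "c = 0")
    case False
    then show ?thesis
      using inv assms(6,7) t \<open>c \<ge> 0\<close>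
      by (intro mult_left_mono vec_power_mult_abs_pds_le[OF assms(1-3) y]) auto
  qed simp
  moreover have "vec_power y \<beta> > 0"
    using y(1) by (simp add: vec_power_pos mem_box_cart)
  ultimately show ?thesis
    using \<open>c \<ge> 0\<close> by (simp add: t chain_term_val_def term_weight_def abs_mult mult_ac)
qed

lemma abs_pds_comp_phi_le:
  fixes f :: "real^'n::finite \<Rightarrow> real"
  assumes "A \<ge> 1" "C \<ge> 0" "open U" "weakly_mild A B C U f" "\<forall>i. weakly_mild A B C U (pd i f)"
    and "open V" "V \<subseteq> box 0 (\<chi> i. 1)" "\<And>y. y \<in> V \<Longrightarrow> phi n y \<in> U"
    and "\<forall>i. n i \<ge> 1" "\<forall>i. length js \<le> n i" "\<forall>i. real (n i) \<le> N" "y \<in> V"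
  shows "\<bar>pds js (f \<circ> phi n) y\<bar>
           \<le> B powr (C + 1) * ((2 * N * A) ^ length js * fact (length js) powr (C + 1))"
proof -
  have "Cinf_on f U"
    using assms(4) by (simp add: weakly_mild_def)
  then have "\<bar>pds js (f \<circ> phi n) y\<bar> = \<bar>\<Sum>t\<leftarrow>chain_terms n js. chain_term_val n f t y\<bar>"
    by (simp add: pds_comp_phi[OF _ assms(6,8,9,12)])
  also have "\<dots> \<le> (\<Sum>t\<leftarrow>chain_terms n js. \<bar>chain_term_val n f t y\<bar>)"
    using sum_list_abs[of "map (\<lambda>t. chain_term_val n f t y) (chain_terms n js)"] by (simp add: o_def)
  also have "\<dots> \<le> (\<Sum>t\<leftarrow>chain_terms n js. B powr (C + 1) * term_weight A C t)"
    using assms(7,8,10,12)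
    by (intro sum_list_mono abs_chain_term_val_le[OF assms(3,4,5)]) auto
  also have "\<dots> = B powr (C + 1) * (\<Sum>t\<leftarrow>chain_terms n js. term_weight A C t)"
    by (rule sum_list_const_mult)
  also have "\<dots> \<le> B powr (C + 1) * ((2 * N * A) ^ length js * fact (length js) powr (C + 1))"
    by (rule mult_left_mono[OF chain_terms_weight_le[OF assms(1,2,11)]]) simp
  finally show ?thesis .
qed

lemma open_phi_preimage:
  assumes "open U"
  shows "open {x \<in> box 0 (\<chi> i. 1). phi n x \<in> U}"
proof -
  have "{x \<in> box 0 (\<chi> i. 1). phi n x \<in> U} = box 0 (\<chi> i. 1) \<inter> phi n -` U"
    by auto
  then show ?thesis
    using continuous_open_preimage[OF continuous_on_phi open_box assms] by simp
qed

lemma mild_upto_comp_phi: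
  fixes f :: "real^'n::finite \<Rightarrow> real"
  assumes "A \<ge> 1" "C \<ge> 0" "open U" "weakly_mild A B C U f" "\<forall>i. weakly_mild A B C U (pd i f)"
    and "\<forall>i. n i \<ge> 1" "\<forall>i. n i \<ge> r" "\<forall>i. real (n i) \<le> N"
  shows "mild_upto (2 * N * A) B C r {x \<in> box 0 (\<chi> i. 1). phi n x \<in> U} (f \<circ> phi n)"
  unfolding mild_upto_def
proof (intro conjI allI impI ballI)
  let ?V = "{x \<in> box 0 (\<chi> i. 1). phi n x \<in> U}"
  have "open ?V"
    using \<open>open U\<close> by (rule open_phi_preimage)
  have "Cinf_on (f \<circ> phi n) ?V"
    using assms(4,6) \<open>open ?V\<close> by (intro Cinf_on_comp_phi) (auto simp: weakly_mild_def)
  then show "Ck_on r (f \<circ> phi n) ?V"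
    by (simp add: Cinf_on_def)
  fix js :: "'n list" and y
  assume "length js \<le> r" "y \<in> ?V"
  then have "\<forall>i. length js \<le> n i"
    using assms(7) le_trans by blast
  have "\<bar>pds js (f \<circ> phi n) y\<bar>
      \<le> B powr (C + 1) * ((2 * N * A) ^ length js * fact (length js) powr (C + 1))"
    by (rule abs_pds_comp_phi_le[OF assms(1-5) \<open>open ?V\<close> _ _ assms(6) \<open>\<forall>i. length js \<le> n i\<close>
          assms(8) \<open>y \<in> ?V\<close>]) auto
  then show "\<bar>pds js (f \<circ> phi n) y\<bar>
      \<le> B powr (C + 1) * (2 * N * A) ^ length js * fact (length js) powr (C + 1)"
    by (simp add: mult.assoc)
qed

lemma mild_upto_mono:
  fixes h :: "real^'n::finite \<Rightarrow> real"
  assumes "mild_upto A B C r W h" "0 \<le> A" "A \<le> A'"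
  shows "mild_upto A' B C r W h"
  unfolding mild_upto_def
proof (intro conjI allI impI ballI)
  show "Ck_on r h W"
    using assms(1) by (simp add: mild_upto_def)
  fix js :: "'n list" and x
  assume "length js \<le> r" "x \<in> W"
  then have "\<bar>pds js h x\<bar> \<le> B powr (C + 1) * A ^ length js * fact (length js) powr (C + 1)"
    using assms(1) by (simp add: mild_upto_def)
  also have "\<dots> \<le> B powr (C + 1) * A' ^ length js * fact (length js) powr (C + 1)"
    using assms(2,3) by (intro mult_right_mono mult_left_mono power_mono) auto
  finally show "\<bar>pds js h x\<bar> \<le> B powr (C + 1) * A' ^ length js * fact (length js) powr (C + 1)" .
qed

lemma two_le_card_Suc_powr:
  assumes "C \<ge> 0"
  shows "2 \<le> (real CARD('n::finite) + 1) powr (C + 1)"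
proof -
  have "real CARD('n) + 1 \<le> (real CARD('n) + 1) powr (C + 1)"
    using powr_mono[of 1 "C + 1" "real CARD('n) + 1"] assms by simp
  moreover have "1 \<le> real CARD('n)"
    by (simp add: Suc_le_eq)
  ultimately show ?thesis
    by linarith
qed

theorem mainTheorem9:
  fixes A B C :: real and U :: "(real^'n::finite) set" and f :: "real^'n \<Rightarrow> real"
    and r :: nat and n :: "'n \<Rightarrow> nat"
  assumes "A \<ge> 1" and "B > 0" and "C \<ge> 0"
    and "open U" and "U \<subseteq> box 0 (\<chi> i. 1)"
    and "weakly_mild A B C U f"
    and "\<forall>i. weakly_mild A B C U (pd i f)"
    and "r > 0" and "\<forall>i. n i \<ge> r"
  shows "mild_upto (real (Max (range n)) * A * (real CARD('n) + 1) powr (C + 1)) B C r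
           {x \<in> box 0 (\<chi> i. 1). phi n x \<in> U} (f \<circ> phi n)"
proof -
  define N where "N = real (Max (range n))"
  have "\<forall>i. n i \<ge> 1"
    using assms(8,9) by (simp add: Suc_le_eq) (meson less_le_trans)
  moreover have "\<forall>i. real (n i) \<le> N"
    by (simp add: N_def)
  ultimately have "mild_upto (2 * N * A) B C r {x \<in> box 0 (\<chi> i. 1). phi n x \<in> U} (f \<circ> phi n)"
    by (rule mild_upto_comp_phi[OF assms(1,3,4,6,7) _ assms(9)])
  moreover have "0 \<le> 2 * N * A"
    using assms(1) by (simp add: N_def)
  moreover have "N * A * 2 \<le> N * A * (real CARD('n) + 1) powr (C + 1)"
    using two_le_card_Suc_powr[OF assms(3), where 'n = 'n] assms(1)
    by (intro mult_left_mono) (simp_all add: N_def)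
  then have "2 * N * A \<le> N * A * (real CARD('n) + 1) powr (C + 1)"
    by (simp add: mult_ac)
  ultimately show ?thesis
    unfolding N_def by (rule mild_upto_mono)
qed

end
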